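(* $$\sum_{k=1}^\infty \frac{1}{2^{k+1}(2k-1)k(2k+1)}=\frac{3}{2\sqrt2}\ln(1+\sqrt2)-\frac12(\ln 2+1),$$ $$\sum_{k=1}^\infty \frac{1}{2^{k+2}(2k-1)k^2(2k+1)}=\frac12+\frac18\ln^2 2-\frac{\pi^2}{48}-\frac{1}{2\sqrt2}\ln(1+\sqrt2),$$ $$\sum_{k=1}^\infty \frac{1}{2^{k+3}(2k-1)k^3(2k+1)}=\frac{3}{2\sqrt2}\ln(1+\sqrt2)+\frac{\pi^2\ln 2}{96}-\frac12(\ln 2+1)-\frac{\ln^3 2}{48}-\frac{7}{64}\zeta(3).$$
   Context: $\zeta$ is the Riemann zeta function. *)

theory Defs
  imports "HOL-Analysis.Analysis"
begin

definition zeta :: "real \<Rightarrow> real" where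
  "zeta s = (\<Sum>n. 1 / (real (Suc n)) powr s)"

end

theory Submission
  imports Defs "HOL-Real_Asymp.Real_Asymp"
begin

text \<open>
  Partial fractions for \<open>1 / ((2k - 1) k\<^sup>m (2k + 1))\<close> reduce each sum to the series
  \<open>\<Sum> x\<^sup>k / (2k - 1)\<close>, \<open>\<Sum> x\<^sup>k / (2k + 1)\<close> and \<open>\<Sum> x\<^sup>k / k\<^sup>m\<close> at \<open>x = 1/2\<close>.
  The first two are \<open>artanh (1/\<surd>2) = ln (1 + \<surd>2)\<close> in disguise; the others are the
  polylogarithm values \<open>Li\<^sub>1(1/2) = ln 2\<close>, \<open>Li\<^sub>2(1/2) = \<pi>\<^sup>2/12 - ln\<^sup>2 2 / 2\<close>
  (Euler's reflection formula) and \<open>Li\<^sub>3(1/2) = 7/8 \<zeta>(3) - \<pi>\<^sup>2 ln 2 / 12 + ln\<^sup>3 2 / 6\<close>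
  (Landen's identity at \<open>x = 1/2\<close>, combined with \<open>Li\<^sub>3(-1) = -3/4 \<zeta>(3)\<close>).
  The functional equations are proved by differentiation: both sides differ by a function
  with derivative zero on an interval ending at 1, and the constant is read off from the
  limit at 1, where \<open>Li\<^sub>k(1) = \<zeta>(k)\<close>.
\<close>

lemma has_real_derivative_zero_imp_eq_left_limit:
  fixes f :: "real \<Rightarrow> real"
  assumes "a < b" "continuous_on {a..<b} f"
    "\<And>x. a < x \<Longrightarrow> x < b \<Longrightarrow> (f has_real_derivative 0) (at x)" "(f \<longlongrightarrow> L) (at_left b)"
  shows "f a = L"
proof -
  have const: "f x = f a" if "a < x" "x < b" for x
    by (rule DERIV_isconst_end[OF that(1)])
       (use assms(2,3) that in \<open>auto intro: continuous_on_subset\<close>)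
  have "eventually (\<lambda>x. f x = f a) (at_left b)"
    using eventually_at_left_real[OF assms(1)] by (rule eventually_mono) (auto intro: const)
  then have "(f \<longlongrightarrow> f a) (at_left b)"
    by (rule tendsto_eventually)
  then show ?thesis
    using assms(4) tendsto_unique trivial_limit_at_left_real by blast
qed

lemma has_sum_diff:
  fixes f g :: "'a \<Rightarrow> 'b::topological_ab_group_add"
  assumes "(f has_sum a) A" "(g has_sum b) A"
  shows "((\<lambda>x. f x - g x) has_sum (a - b)) A"
  using has_sum_add[OF assms(1), of "\<lambda>x. - g x" "- b"] assms(2) by (simp add: has_sum_uminus)

lemma sums_Suc_imp_has_sum_atLeast_1:
  fixes f :: "nat \<Rightarrow> real"
  assumes "(\<lambda>n. f (Suc n)) sums s" "\<And>n. 0 < n \<Longrightarrow> 0 \<le> f n"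
  shows "(f has_sum s) {1..}"
proof -
  have "((\<lambda>n. f (Suc n)) has_sum s) UNIV"
    using assms by (intro sums_nonneg_imp_has_sum) auto
  also have "?this \<longleftrightarrow> ?thesis"
    by (intro has_sum_reindex_bij_witness[of _ "\<lambda>n. n - 1" "\<lambda>n. n + 1"]) auto
  finally show ?thesis .
qed

lemma real_sqrt_power_odd: "0 \<le> x \<Longrightarrow> sqrt x ^ (2 * n + 1) = sqrt x * x ^ n"
  by (simp add: power_mult)

section \<open>The real polylogarithm\<close>

text \<open>
  The series
  converges for \<open>\<bar>x\<bar> < 1\<close>, and for \<open>\<bar>x\<bar> \<le> 1\<close> when \<open>k \<ge> 2\<close>; elsewhere the value is
  unspecified.
\<close>
definition polylog :: "nat \<Rightarrow> real \<Rightarrow> real" where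
  "polylog k x = (\<Sum>n. x ^ Suc n / real (Suc n) ^ k)"

lemma polylog_at_0 [simp]: "polylog k 0 = 0"
  by (simp add: polylog_def)

lemma polylog_at_1: "polylog k 1 = zeta (real k)"
  by (simp add: polylog_def zeta_def powr_realpow)

lemma summable_polylog:
  assumes "\<bar>x\<bar> < 1"
  shows "summable (\<lambda>n. x ^ Suc n / real (Suc n) ^ k)"
proof (rule summable_comparison_test')
  show "summable (\<lambda>n. \<bar>x\<bar> ^ Suc n)"
    using assms by (subst summable_Suc_iff) (simp add: summable_geometric)
  show "norm (x ^ Suc n / real (Suc n) ^ k) \<le> \<bar>x\<bar> ^ Suc n" for n
  proof -
    have "\<bar>x\<bar> ^ Suc n / real (Suc n) ^ k \<le> \<bar>x\<bar> ^ Suc n / 1"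
      by (rule divide_left_mono) (simp_all del: power_Suc of_nat_Suc)
    then show ?thesis
      by (simp add: power_abs abs_divide del: power_Suc)
  qed
qed

lemma summable_inverse_Suc_power:
  "2 \<le> k \<Longrightarrow> summable (\<lambda>n. 1 / real (Suc n) ^ k)"
  using inverse_power_summable[of k] by (subst summable_Suc_iff) (simp add: divide_inverse)

lemma polylog_term_le:
  "\<bar>x\<bar> \<le> 1 \<Longrightarrow> norm (x ^ Suc n / real (Suc n) ^ k) \<le> 1 / real (Suc n) ^ k"
  using power_le_one[of "\<bar>x\<bar>" "Suc n"]
  by (simp add: power_abs abs_divide divide_right_mono del: power_Suc of_nat_Suc)

lemma summable_polylog_abs_le_1:
  "2 \<le> k \<Longrightarrow> \<bar>x\<bar> \<le> 1 \<Longrightarrow> summable (\<lambda>n. x ^ Suc n / real (Suc n) ^ k)"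
  by (rule summable_comparison_test'[OF summable_inverse_Suc_power polylog_term_le])

lemma continuous_on_polylog:
  assumes "2 \<le> k"
  shows "continuous_on {-1..1} (polylog k)"
proof -
  have "uniform_limit {-1..1} (\<lambda>m x. \<Sum>n<m. x ^ Suc n / real (Suc n) ^ k) (polylog k) sequentially"
    unfolding polylog_def[abs_def]
    by (rule Weierstrass_m_test[OF polylog_term_le summable_inverse_Suc_power[OF assms]]) auto
  moreover have "continuous_on {-1..1} (\<lambda>x. \<Sum>n<m. x ^ Suc n / real (Suc n) ^ k)" for m
    by (intro continuous_intros) auto
  ultimately show ?thesis
    by (intro uniform_limit_theorem[OF always_eventually]) auto
qed

lemma continuous_on_polylog' [continuous_intros]:
  assumes "continuous_on A f" "2 \<le> k" "\<And>x. x \<in> A \<Longrightarrow> f x \<in> {-1..1}"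
  shows "continuous_on A (\<lambda>x. polylog k (f x))"
  by (rule continuous_on_compose2[OF continuous_on_polylog[OF assms(2)] assms(1)])
     (use assms(3) in auto)

lemma tendsto_polylog [tendsto_intros]:
  assumes "(f \<longlongrightarrow> a) F" "2 \<le> k" "a \<in> {-1..1}" "eventually (\<lambda>x. f x \<in> {-1..1}) F"
  shows "((\<lambda>x. polylog k (f x)) \<longlongrightarrow> polylog k a) F"
  by (rule continuous_on_tendsto_compose[OF continuous_on_polylog[OF assms(2)] assms(1)])
     (use assms(3,4) in auto)

lemma polylog_has_sum:
  assumes "0 \<le> x" "x < 1"
  shows "((\<lambda>n. x ^ n / real n ^ k) has_sum polylog k x) {1..}"
proof (rule sums_Suc_imp_has_sum_atLeast_1)
  show "(\<lambda>n. x ^ Suc n / real (Suc n) ^ k) sums polylog k x"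
    unfolding polylog_def using assms by (intro summable_sums summable_polylog) auto
qed (use assms in simp)

text \<open>Stated with \<open>Suc 0\<close>, the simp normal form of \<open>1 :: nat\<close>, so that it still applies
  after simplification of \<open>polylog (2 - 1)\<close>.\<close>
lemma polylog_1_eq_minus_ln:
  assumes "\<bar>x\<bar> < 1"
  shows "polylog (Suc 0) x = - ln (1 - x)"
proof -
  have "(\<lambda>n. - (x ^ n / real n)) sums ln (1 - x)"
    using ln_series'[of "- x"] assms by simp
  then have "(\<lambda>n. x ^ Suc n / real (Suc n)) sums - ln (1 - x)"
    using sums_minus by (subst sums_Suc_iff) fastforce
  then show ?thesis
    by (simp add: polylog_def sums_iff)
qed

lemma polylog_2_at_1: "polylog 2 1 = pi ^ 2 / 6"
  using inverse_squares_sums by (simp add: polylog_def sums_iff add.commute)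

lemma has_field_derivative_polylog:
  assumes "0 < k" "\<bar>x\<bar> < 1" "x \<noteq> 0"
  shows "(polylog k has_field_derivative polylog (k - 1) x / x) (at x)"
proof -
  define c where "c n = 1 / real n ^ k" for n
  have summable_c: "summable (\<lambda>n. c n * z ^ n)" if "\<bar>z\<bar> < 1" for z
    using summable_polylog[OF that, of k] summable_Suc_iff[where f = "\<lambda>n. c n * z ^ n"]
    by (simp add: c_def)
  have power_series: "(\<Sum>n. c n * z ^ n) = polylog k z" if "\<bar>z\<bar> < 1" for z
    using suminf_split_head[OF summable_c[OF that]] assms(1) by (simp add: c_def polylog_def)
  have "((\<lambda>z. \<Sum>n. c n * z ^ n) has_field_derivative (\<Sum>n. diffs c n * x ^ n)) (at x)"
    by (rule termdiffs_strong'[of 1]) (use assms summable_c in auto)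
  then have "(polylog k has_field_derivative (\<Sum>n. diffs c n * x ^ n)) (at x)"
    by (rule has_field_derivative_transform_within_open[of _ _ _ "{-1<..<1}"])
       (use assms power_series in auto)
  moreover have "(\<Sum>n. diffs c n * x ^ n) = polylog (k - 1) x / x"
  proof -
    have termwise: "x * (diffs c n * x ^ n) = x ^ Suc n / real (Suc n) ^ (k - 1)" for n
      using assms(1) by (cases k) (simp_all add: diffs_def c_def)
    have "summable (\<lambda>n. diffs c n * x ^ n)"
      by (rule termdiff_converges[of x 1]) (use assms summable_c in auto)
    then have "x * (\<Sum>n. diffs c n * x ^ n) = (\<Sum>n. x * (diffs c n * x ^ n))"
      by (rule suminf_mult[symmetric])
    also have "\<dots> = polylog (k - 1) x"
      by (simp add: termwise polylog_def)
    finally show ?thesis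
      using assms(3) by (simp add: eq_divide_eq mult.commute)
  qed
  ultimately show ?thesis
    by simp
qed

lemma has_real_derivative_polylog_compose [derivative_intros]:
  assumes "(g has_real_derivative g') (at x)" "0 < k" "\<bar>g x\<bar> < 1" "g x \<noteq> 0"
  shows "((\<lambda>x. polylog k (g x)) has_real_derivative polylog (k - 1) (g x) / g x * g') (at x)"
  using DERIV_chain2[OF has_field_derivative_polylog[OF assms(2-4)] assms(1)] .

section \<open>Functional equations and special values\<close>

lemma polylog_2_reflection:
  assumes "0 < x" "x < 1"
  shows "polylog 2 x + polylog 2 (1 - x) + ln x * ln (1 - x) = pi ^ 2 / 6"
proof (rule has_real_derivative_zero_imp_eq_left_limit[OF assms(2)])
  show "continuous_on {x..<1} (\<lambda>t. polylog 2 t + polylog 2 (1 - t) + ln t * ln (1 - t))"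
    using assms by (intro continuous_intros) auto
  show "((\<lambda>t. polylog 2 t + polylog 2 (1 - t) + ln t * ln (1 - t)) has_real_derivative 0) (at t)"
    if "x < t" "t < 1" for t
  proof -
    have "0 < t" "t < 1" using assms that by auto
    then show ?thesis
      by (auto intro!: derivative_eq_intros simp: polylog_1_eq_minus_ln divide_simps)
  qed
  have "((\<lambda>t. ln t * ln (1 - t)) \<longlongrightarrow> 0) (at_left (1::real))"
    by real_asymp
  moreover have "eventually (\<lambda>t. t \<in> {-1..1} \<and> 1 - t \<in> {-1..1}) (at_left (1::real))"
    using eventually_at_left_real[of 0 1] by (rule eventually_mono) auto
  ultimately have "((\<lambda>t. polylog 2 t + polylog 2 (1 - t) + ln t * ln (1 - t))
      \<longlongrightarrow> polylog 2 1 + polylog 2 (1 - 1) + 0) (at_left 1)"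
    by (intro tendsto_add tendsto_polylog tendsto_intros) (auto elim: eventually_mono)
  then show "((\<lambda>t. polylog 2 t + polylog 2 (1 - t) + ln t * ln (1 - t)) \<longlongrightarrow> pi ^ 2 / 6)
      (at_left 1)"
    by (simp add: polylog_2_at_1)
qed

lemma polylog_2_landen:
  assumes "1 / 2 \<le> x" "x < 1"
  shows "polylog 2 (1 - 1 / x) + polylog 2 (1 - x) + ln x ^ 2 / 2 = 0"
proof (rule has_real_derivative_zero_imp_eq_left_limit[OF assms(2)])
  show "continuous_on {x..<1} (\<lambda>t. polylog 2 (1 - 1 / t) + polylog 2 (1 - t) + ln t ^ 2 / 2)"
    using assms by (intro continuous_intros) (auto simp: field_simps)
  show "((\<lambda>t. polylog 2 (1 - 1 / t) + polylog 2 (1 - t) + ln t ^ 2 / 2)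
          has_real_derivative 0) (at t)" if "x < t" "t < 1" for t
  proof -
    have t: "1 / 2 < t" "t < 1" using assms that by auto
    then have "1 / t < 2" by (simp add: field_simps)
    with t have "((\<lambda>t. polylog 2 (1 - 1 / t) + polylog 2 (1 - t) + ln t ^ 2 / 2) has_real_derivative
        polylog 1 (1 - 1 / t) / (1 - 1 / t) * (1 / t ^ 2) - polylog 1 (1 - t) / (1 - t) + ln t / t)
        (at t)" (is "(_ has_real_derivative ?D) _")
      by (auto intro!: derivative_eq_intros simp: power2_eq_square)
    moreover have "?D = 0"
      using t by (simp add: polylog_1_eq_minus_ln ln_div divide_simps)
        (simp add: algebra_simps power2_eq_square)
    ultimately show ?thesis by simp
  qed
  have "eventually (\<lambda>t. 1 - 1 / t \<in> {-1..1} \<and> 1 - t \<in> {-1..1}) (at_left (1::real))"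
    using eventually_at_left_real[of "1 / 2" 1] by (rule eventually_mono) (auto simp: field_simps)
  then have "((\<lambda>t. polylog 2 (1 - 1 / t) + polylog 2 (1 - t) + ln t ^ 2 / 2)
      \<longlongrightarrow> polylog 2 (1 - 1 / 1) + polylog 2 (1 - 1) + ln 1 ^ 2 / 2) (at_left 1)"
    by (intro tendsto_add tendsto_polylog tendsto_intros) (auto elim: eventually_mono)
  then show "((\<lambda>t. polylog 2 (1 - 1 / t) + polylog 2 (1 - t) + ln t ^ 2 / 2) \<longlongrightarrow> 0) (at_left 1)"
    by simp
qed

lemma polylog_3_landen:
  assumes "1 / 2 \<le> x" "x < 1"
  shows "polylog 3 x + polylog 3 (1 - x) + polylog 3 (1 - 1 / x)
           = zeta 3 + ln x ^ 3 / 6 + pi ^ 2 / 6 * ln x - ln x ^ 2 * ln (1 - x) / 2"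
proof -
  define L where "L t = ln t ^ 3 / 6 + pi ^ 2 / 6 * ln t - ln t ^ 2 * ln (1 - t) / 2" for t :: real
  have "polylog 3 x + polylog 3 (1 - x) + polylog 3 (1 - 1 / x) - L x = zeta 3"
  proof (rule has_real_derivative_zero_imp_eq_left_limit[OF assms(2)])
    show "continuous_on {x..<1} (\<lambda>t. polylog 3 t + polylog 3 (1 - t) + polylog 3 (1 - 1 / t) - L t)"
      unfolding L_def using assms by (intro continuous_intros) (auto simp: field_simps)
    show "((\<lambda>t. polylog 3 t + polylog 3 (1 - t) + polylog 3 (1 - 1 / t) - L t)
            has_real_derivative 0) (at t)" if "x < t" "t < 1" for t
    proof -
      have t: "1 / 2 < t" "t < 1" using assms that by auto
      then have "1 / t < 2" by (simp add: field_simps)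
      with t have "((\<lambda>t. polylog 3 t + polylog 3 (1 - t) + polylog 3 (1 - 1 / t) - L t)
          has_real_derivative
            polylog 2 t / t - polylog 2 (1 - t) / (1 - t)
            + polylog 2 (1 - 1 / t) / (1 - 1 / t) * (1 / t ^ 2)
            - (ln t ^ 2 / (2 * t) + pi ^ 2 / (6 * t)
               - (ln t * ln (1 - t) / t - ln t ^ 2 / (2 * (1 - t))))) (at t)"
        (is "(_ has_real_derivative ?D) _")
        unfolding L_def
        by (auto intro!: derivative_eq_intros simp: power2_eq_square) (simp add: field_simps)
      moreover have "?D = 0"
      proof -
        have reflection: "polylog 2 t = pi ^ 2 / 6 - polylog 2 (1 - t) - ln t * ln (1 - t)"
          using polylog_2_reflection[of t] t by simp
        have landen: "polylog 2 (1 - 1 / t) = - polylog 2 (1 - t) - ln t ^ 2 / 2"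
          using polylog_2_landen[of t] t by simp
        show ?thesis
          unfolding reflection landen
          using t by (simp add: divide_simps) (simp add: algebra_simps power2_eq_square)
      qed
      ultimately show ?thesis
        by simp
    qed
    have "(L \<longlongrightarrow> 0) (at_left 1)"
      unfolding L_def by real_asymp
    moreover have "eventually (\<lambda>t. t \<in> {-1..1} \<and> 1 - t \<in> {-1..1} \<and> 1 - 1 / t \<in> {-1..1})
        (at_left (1::real))"
      using eventually_at_left_real[of "1 / 2" 1] by (rule eventually_mono) (auto simp: field_simps)
    ultimately have "((\<lambda>t. polylog 3 t + polylog 3 (1 - t) + polylog 3 (1 - 1 / t) - L t)
        \<longlongrightarrow> polylog 3 1 + polylog 3 (1 - 1) + polylog 3 (1 - 1 / 1) - 0) (at_left 1)"
      by (intro tendsto_diff tendsto_add tendsto_polylog tendsto_intros)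
         (auto elim: eventually_mono)
    then show "((\<lambda>t. polylog 3 t + polylog 3 (1 - t) + polylog 3 (1 - 1 / t) - L t)
        \<longlongrightarrow> zeta 3) (at_left 1)"
      by (simp add: polylog_at_1)
  qed
  then show ?thesis
    unfolding L_def by simp
qed

lemma polylog_duplication:
  assumes "2 \<le> k" "\<bar>x\<bar> \<le> 1"
  shows "polylog k x + polylog k (- x) = 2 * polylog k (x ^ 2) / 2 ^ k"
proof -
  define g where "g m = 2 * ((x ^ 2) ^ Suc m / real (Suc m) ^ k) / 2 ^ k" for m
  have "\<bar>x ^ 2\<bar> \<le> 1"
    using assms(2) by (simp add: abs_square_le_1)
  then have "g sums (2 * polylog k (x ^ 2) / 2 ^ k)"
    unfolding g_def polylog_def
    by (intro sums_divide sums_mult summable_sums summable_polylog_abs_le_1 assms(1))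
  then have "(\<lambda>n. if even n then 0 else g ((n - 1) div 2)) sums (2 * polylog k (x ^ 2) / 2 ^ k)"
    by (rule sums_if')
  moreover have "(if even n then 0 else g ((n - 1) div 2))
      = x ^ Suc n / real (Suc n) ^ k + (- x) ^ Suc n / real (Suc n) ^ k" for n
  proof (cases "even n")
    case False
    then obtain m where n: "n = 2 * m + 1"
      by (rule oddE)
    then have "Suc n = 2 * Suc m"
      by simp
    then show ?thesis
      unfolding \<open>Suc n = 2 * Suc m\<close> power_mult of_nat_mult using n
      by (simp add: g_def power_mult_distrib del: power_Suc of_nat_Suc)
  qed simp
  moreover have "(\<lambda>n. x ^ Suc n / real (Suc n) ^ k + (- x) ^ Suc n / real (Suc n) ^ k)
      sums (polylog k x + polylog k (- x))"
    unfolding polylog_def using assms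
    by (intro sums_add summable_sums summable_polylog_abs_le_1) auto
  ultimately show ?thesis
    using sums_unique2 by simp
qed

lemma polylog_at_minus_1:
  "2 \<le> k \<Longrightarrow> polylog k (- 1) = (2 / 2 ^ k - 1) * zeta k"
  using polylog_duplication[of k 1] by (simp add: polylog_at_1 algebra_simps)

lemma polylog_2_at_half: "polylog 2 (1 / 2) = pi ^ 2 / 12 - ln 2 ^ 2 / 2"
  using polylog_2_reflection[of "1 / 2"] by (simp add: ln_div power2_eq_square)

lemma polylog_3_at_half: "polylog 3 (1 / 2) = 7 / 8 * zeta 3 - pi ^ 2 * ln 2 / 12 + ln 2 ^ 3 / 6"
  using polylog_3_landen[of "1 / 2"] polylog_at_minus_1[of 3]
  by (simp add: ln_div power3_eq_cube power2_eq_square)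

section \<open>Series from the inverse hyperbolic tangent\<close>

lemma artanh_sums:
  fixes y :: real
  assumes "\<bar>y\<bar> < 1"
  shows "(\<lambda>n. y ^ (2 * n + 1) / real (2 * n + 1)) sums artanh y"
proof -
  define z where "z = (1 + y) / (1 - y)"
  have "0 < z" "(z - 1) / (z + 1) = y"
    using assms by (auto simp: z_def field_simps)
  then have "(\<lambda>n. 2 * (y ^ (2 * n + 1) / real (2 * n + 1))) sums (2 * artanh y)"
    using ln_series_quadratic[of z] by (simp add: artanh_def z_def)
  then show ?thesis
    by (subst (asm) sums_mult_iff) simp_all
qed

lemma artanh_inverse_sqrt_2: "artanh (1 / sqrt 2) = ln (1 + sqrt 2)"
proof -
  have "sqrt 2 * sqrt 2 = (2::real)" "1 < sqrt (2::real)" "sqrt 2 < (2::real)"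
    using real_sqrt_less_mono[of 2 4] by (simp_all add: real_sqrt_four)
  then have "(1 + 1 / sqrt 2) / (1 - 1 / sqrt 2) = (1 + sqrt 2) ^ 2"
    by (simp add: divide_simps power2_eq_square algebra_simps)
  then show ?thesis
    by (simp add: artanh_def ln_realpow add_pos_nonneg)
qed

lemma has_sum_power_div_2k_minus_1:
  assumes "0 \<le> x" "x < 1"
  shows "((\<lambda>k. x ^ k / (2 * real k - 1)) has_sum sqrt x * artanh (sqrt x)) {1..}"
proof (rule sums_Suc_imp_has_sum_atLeast_1)
  have "(\<lambda>n. sqrt x * (sqrt x ^ (2 * n + 1) / real (2 * n + 1)))
      sums (sqrt x * artanh (sqrt x))"
    using assms by (intro sums_mult artanh_sums) simp
  moreover have "sqrt x * (sqrt x ^ (2 * n + 1) / real (2 * n + 1))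
      = x ^ Suc n / (2 * real (Suc n) - 1)" for n
    by (simp only: real_sqrt_power_odd[OF assms(1)]) (simp add: mult.assoc[symmetric] assms(1))
  ultimately show "(\<lambda>n. x ^ Suc n / (2 * real (Suc n) - 1)) sums (sqrt x * artanh (sqrt x))"
    by (simp only:)
qed (use assms in simp)

lemma has_sum_power_div_2k_plus_1:
  assumes "0 < x" "x < 1"
  shows "((\<lambda>k. x ^ k / (2 * real k + 1)) has_sum artanh (sqrt x) / sqrt x - 1) {1..}"
proof (rule sums_Suc_imp_has_sum_atLeast_1)
  define a where "a n = sqrt x ^ (2 * n + 1) / real (2 * n + 1)" for n
  have "a sums artanh (sqrt x)"
    unfolding a_def using assms by (intro artanh_sums) simp
  then have "(\<lambda>n. a (Suc n)) sums (artanh (sqrt x) - sqrt x)"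
    using sums_Suc_iff[of a] by (simp add: a_def)
  then have "(\<lambda>n. a (Suc n) / sqrt x) sums ((artanh (sqrt x) - sqrt x) / sqrt x)"
    by (rule sums_divide)
  moreover have "(artanh (sqrt x) - sqrt x) / sqrt x = artanh (sqrt x) / sqrt x - 1"
    using assms by (simp add: diff_divide_distrib)
  moreover have "a (Suc n) / sqrt x = x ^ Suc n / (2 * real (Suc n) + 1)" for n
    unfolding a_def using assms
    by (simp only: real_sqrt_power_odd less_imp_le) simp
  ultimately show "(\<lambda>n. x ^ Suc n / (2 * real (Suc n) + 1)) sums (artanh (sqrt x) / sqrt x - 1)"
    by (simp only:)
qed (use assms in simp)

lemma has_sum_half_power_div_2k_minus_1:
  "((\<lambda>k. (1 / 2) ^ k / (2 * real k - 1)) has_sum ln (1 + sqrt 2) / sqrt 2) {1..}"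
  using has_sum_power_div_2k_minus_1[of "1 / 2"]
  by (simp add: real_sqrt_divide artanh_inverse_sqrt_2)

lemma has_sum_half_power_div_2k_plus_1:
  "((\<lambda>k. (1 / 2) ^ k / (2 * real k + 1)) has_sum sqrt 2 * ln (1 + sqrt 2) - 1) {1..}"
  using has_sum_power_div_2k_plus_1[of "1 / 2"]
  by (simp add: real_sqrt_divide artanh_inverse_sqrt_2 mult.commute)

section \<open>The three sums\<close>

lemma odd_neighbours_partial_fractions:
  fixes w c :: real
  assumes "1 \<le> w"
  shows "c / ((2 * w - 1) * w * (2 * w + 1)) = c / (2 * w - 1) + c / (2 * w + 1) - c / w"
    and "c / ((2 * w - 1) * w ^ 2 * (2 * w + 1))
           = 2 * c / (2 * w - 1) - 2 * c / (2 * w + 1) - c / w ^ 2"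
    and "c / ((2 * w - 1) * w ^ 3 * (2 * w + 1))
           = 4 * c / (2 * w - 1) + 4 * c / (2 * w + 1) - 4 * c / w - c / w ^ 3"
proof -
  define a b where "a = 2 * w - 1" and "b = 2 * w + 1"
  have "a \<noteq> 0" "b \<noteq> 0" "w \<noteq> 0"
    using assms by (auto simp: a_def b_def)
  then have "c / (a * w * b) = c / a + c / b - c / w"
    and "c / (a * w ^ 2 * b) = 2 * c / a - 2 * c / b - c / w ^ 2"
    and "c / (a * w ^ 3 * b) = 4 * c / a + 4 * c / b - 4 * c / w - c / w ^ 3"
    by (simp_all add: field_simps)
      (simp_all add: a_def b_def algebra_simps power2_eq_square power3_eq_cube)
  then show "c / ((2 * w - 1) * w * (2 * w + 1)) = c / (2 * w - 1) + c / (2 * w + 1) - c / w"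
    and "c / ((2 * w - 1) * w ^ 2 * (2 * w + 1))
           = 2 * c / (2 * w - 1) - 2 * c / (2 * w + 1) - c / w ^ 2"
    and "c / ((2 * w - 1) * w ^ 3 * (2 * w + 1))
           = 4 * c / (2 * w - 1) + 4 * c / (2 * w + 1) - 4 * c / w - c / w ^ 3"
    by (simp_all only: a_def b_def)
qed

lemma has_sum_inverse_odd_neighbours_k:
  "((\<lambda>k. 1 / (2 ^ (k + 1) * (2 * real k - 1) * real k * (2 * real k + 1)))
     has_sum (3 / (2 * sqrt 2) * ln (1 + sqrt 2) - 1 / 2 * (ln 2 + 1))) {1..}"
proof -
  have "((\<lambda>k. ((1 / 2) ^ k / (2 * real k - 1) + (1 / 2) ^ k / (2 * real k + 1)
               - (1 / 2) ^ k / real k ^ 1) / 2)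
      has_sum (ln (1 + sqrt 2) / sqrt 2 + (sqrt 2 * ln (1 + sqrt 2) - 1) - polylog 1 (1 / 2)) / 2)
      {1..}" (is "(?f has_sum ?S) _")
    by (intro has_sum_divide_const has_sum_add has_sum_diff has_sum_half_power_div_2k_minus_1
        has_sum_half_power_div_2k_plus_1 polylog_has_sum) auto
  also have "?S = 3 / (2 * sqrt 2) * ln (1 + sqrt 2) - 1 / 2 * (ln 2 + 1)"
    using polylog_1_eq_minus_ln[of "1 / 2"] by (simp add: ln_div field_simps)
  finally show ?thesis
  proof (rule has_sum_cong[THEN iffD1, rotated])
    fix k :: nat
    assume "k \<in> {1..}"
    then have "1 \<le> real k"
      by simp
    have "1 / (2 ^ (k + 1) * (2 * real k - 1) * real k * (2 * real k + 1))
        = (1 / 2) ^ k / ((2 * real k - 1) * real k * (2 * real k + 1)) / 2"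
      by (simp add: power_one_over power_add mult_ac)
    then show "?f k = 1 / (2 ^ (k + 1) * (2 * real k - 1) * real k * (2 * real k + 1))"
      using odd_neighbours_partial_fractions(1)[OF \<open>1 \<le> real k\<close>] by simp
  qed
qed

lemma has_sum_inverse_odd_neighbours_k2:
  "((\<lambda>k. 1 / (2 ^ (k + 2) * (2 * real k - 1) * real k ^ 2 * (2 * real k + 1)))
     has_sum (1 / 2 + 1 / 8 * (ln 2) ^ 2 - pi ^ 2 / 48 - 1 / (2 * sqrt 2) * ln (1 + sqrt 2))) {1..}"
proof -
  have "((\<lambda>k. (2 * ((1 / 2) ^ k / (2 * real k - 1)) - 2 * ((1 / 2) ^ k / (2 * real k + 1))
               - (1 / 2) ^ k / real k ^ 2) / 4)
      has_sum (2 * (ln (1 + sqrt 2) / sqrt 2) - 2 * (sqrt 2 * ln (1 + sqrt 2) - 1)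
               - polylog 2 (1 / 2)) / 4)
      {1..}" (is "(?f has_sum ?S) _")
    by (intro has_sum_divide_const has_sum_diff has_sum_cmult_right
        has_sum_half_power_div_2k_minus_1 has_sum_half_power_div_2k_plus_1 polylog_has_sum) auto
  also have "?S = 1 / 2 + 1 / 8 * (ln 2) ^ 2 - pi ^ 2 / 48 - 1 / (2 * sqrt 2) * ln (1 + sqrt 2)"
    by (simp add: polylog_2_at_half field_simps)
  finally show ?thesis
  proof (rule has_sum_cong[THEN iffD1, rotated])
    fix k :: nat
    assume "k \<in> {1..}"
    then have "1 \<le> real k"
      by simp
    have "1 / (2 ^ (k + 2) * (2 * real k - 1) * real k ^ 2 * (2 * real k + 1))
        = (1 / 2) ^ k / ((2 * real k - 1) * real k ^ 2 * (2 * real k + 1)) / 4"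
      by (simp add: power_one_over power_add mult_ac)
    then show "?f k = 1 / (2 ^ (k + 2) * (2 * real k - 1) * real k ^ 2 * (2 * real k + 1))"
      using odd_neighbours_partial_fractions(2)[OF \<open>1 \<le> real k\<close>] by simp
  qed
qed

lemma has_sum_inverse_odd_neighbours_k3:
  "((\<lambda>k. 1 / (2 ^ (k + 3) * (2 * real k - 1) * real k ^ 3 * (2 * real k + 1)))
     has_sum (3 / (2 * sqrt 2) * ln (1 + sqrt 2) + pi ^ 2 * ln 2 / 96 - 1 / 2 * (ln 2 + 1)
              - (ln 2) ^ 3 / 48 - 7 / 64 * zeta 3)) {1..}"
proof -
  have "((\<lambda>k. (4 * ((1 / 2) ^ k / (2 * real k - 1)) + 4 * ((1 / 2) ^ k / (2 * real k + 1))
               - 4 * ((1 / 2) ^ k / real k ^ 1) - (1 / 2) ^ k / real k ^ 3) / 8)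
      has_sum (4 * (ln (1 + sqrt 2) / sqrt 2) + 4 * (sqrt 2 * ln (1 + sqrt 2) - 1)
               - 4 * polylog 1 (1 / 2) - polylog 3 (1 / 2)) / 8)
      {1..}" (is "(?f has_sum ?S) _")
    by (intro has_sum_divide_const has_sum_diff has_sum_add has_sum_cmult_right
        has_sum_half_power_div_2k_minus_1 has_sum_half_power_div_2k_plus_1 polylog_has_sum) auto
  also have "?S = 3 / (2 * sqrt 2) * ln (1 + sqrt 2) + pi ^ 2 * ln 2 / 96 - 1 / 2 * (ln 2 + 1)
                  - (ln 2) ^ 3 / 48 - 7 / 64 * zeta 3"
    using polylog_1_eq_minus_ln[of "1 / 2"] by (simp add: polylog_3_at_half ln_div field_simps)
  finally show ?thesis
  proof (rule has_sum_cong[THEN iffD1, rotated])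
    fix k :: nat
    assume "k \<in> {1..}"
    then have "1 \<le> real k"
      by simp
    have "1 / (2 ^ (k + 3) * (2 * real k - 1) * real k ^ 3 * (2 * real k + 1))
        = (1 / 2) ^ k / ((2 * real k - 1) * real k ^ 3 * (2 * real k + 1)) / 8"
      by (simp add: power_one_over power_add mult_ac)
    then show "?f k = 1 / (2 ^ (k + 3) * (2 * real k - 1) * real k ^ 3 * (2 * real k + 1))"
      using odd_neighbours_partial_fractions(3)[OF \<open>1 \<le> real k\<close>] by simp
  qed
qed

theorem corollary4:
  shows "((\<lambda>k::nat. 1 / (2 ^ (k + 1) * (2 * real k - 1) * real k * (2 * real k + 1)))
            has_sum (3 / (2 * sqrt 2) * ln (1 + sqrt 2) - 1 / 2 * (ln 2 + 1))) {1..} \<and>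
         ((\<lambda>k::nat. 1 / (2 ^ (k + 2) * (2 * real k - 1) * real k ^ 2 * (2 * real k + 1)))
            has_sum (1 / 2 + 1 / 8 * (ln 2) ^ 2 - pi ^ 2 / 48 - 1 / (2 * sqrt 2) * ln (1 + sqrt 2))) {1..} \<and>
         ((\<lambda>k::nat. 1 / (2 ^ (k + 3) * (2 * real k - 1) * real k ^ 3 * (2 * real k + 1)))
            has_sum (3 / (2 * sqrt 2) * ln (1 + sqrt 2) + pi ^ 2 * ln 2 / 96 - 1 / 2 * (ln 2 + 1)
                     - (ln 2) ^ 3 / 48 - 7 / 64 * zeta 3)) {1..}"
  using has_sum_inverse_odd_neighbours_k has_sum_inverse_odd_neighbours_k2
    has_sum_inverse_odd_neighbours_k3 by blast

end
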